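(* Let $f\in\mathbf C[[x]][y]$ be a reduced distinguished polynomial of degree $n\ge 2$, and let $d$ be the l.c.m. of the degrees of its irreducible factors. Then for every $r\in\frac1d\mathbf Z$: $$\mathcal F_rf\subset\mathcal F_{r+1}f'_x+\mathcal E_{>r}f'_y.$$
   Context: Distinguished: monic in $y$ with $f(0,y)=y^n$. Write $f=\prod_{i=1}^n(y-a_i)$ with pairwise distinct $a_i$ in $\overline K=\bigcup_{e\ge1}\mathbf C[[x^{1/e}]][1/x]$ (valuation $\nu$). Let $\varepsilon_i=\prod_{j\ne i}(y-a_j)$, a basis of the $\overline K$-space $\overline{\mathcal E}$ of polynomials of degree $<n$ in $y$. For $w=\sum_iw_i\varepsilon_i$, $\mathrm{val}(w)=\inf_i\nu(w_i)$. With $K=\mathbf C((x))$, $\mathcal E$ (resp. $\mathcal F$) is the $K$-space of polynomials in $K[y]$ of degree $<n$ (resp. $<n-1$); $\mathcal E_r=\{w\in\mathcal E:\mathrm{val}(w)\ge r\}$, $\mathcal E_{>r}=\{w\in\mathcal E:\mathrm{val}(w)>r\}$, $\mathcal F_r=\mathcal E_r\cap\mathcal F$. $f'_x,f'_y$ are the partial derivatives. *)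

theory Defs
  imports "HOL-Computational_Algebra.Computational_Algebra"
begin

definition distinguished :: "complex fps poly \<Rightarrow> bool" where
  "distinguished f \<longleftrightarrow> lead_coeff f = 1 \<and> (\<forall>k < degree f. poly.coeff f k $ 0 = 0)"

definition reduced :: "complex fps poly \<Rightarrow> bool" where
  "reduced f \<longleftrightarrow> f \<noteq> 0 \<and> (\<forall>g. g * g dvd f \<longrightarrow> is_unit g)"

definition lcm_irr_degrees :: "complex fps poly \<Rightarrow> nat" where
  "lcm_irr_degrees f = Lcm {degree g | g. irreducible g \<and> g dvd f}"

text \<open>Substitution x := t^N, embedding C((x)) into C((t)) = C((x^(1/N))).\<close>
definition ramify :: "nat \<Rightarrow> complex fls \<Rightarrow> complex fls" where
  "ramify N c = fls_compose_fps c (fps_X ^ N)"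

definition fps_poly_to_fls :: "complex fps poly \<Rightarrow> complex fls poly" where
  "fps_poly_to_fls f = map_poly fps_to_fls f"

definition dx :: "complex fps poly \<Rightarrow> complex fps poly" where
  "dx f = map_poly fps_deriv f"

definition dy :: "complex fps poly \<Rightarrow> complex fps poly" where
  "dy f = pderiv f"

definition eps :: "nat \<Rightarrow> (nat \<Rightarrow> complex fls) \<Rightarrow> nat \<Rightarrow> complex fls poly" where
  "eps n a i = (\<Prod>j\<in>{..<n} - {i}. [:- a j, 1:])"

text \<open>Valuation on C((t)) with t = x^(1/N): nu(c) = subdeg(c)/N; nu(0) = infinity.\<close>
definition nu_ge :: "nat \<Rightarrow> complex fls \<Rightarrow> rat \<Rightarrow> bool" where
  "nu_ge N c r \<longleftrightarrow> c = 0 \<or> of_int (fls_subdegree c) / of_nat N \<ge> r"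

definition nu_gt :: "nat \<Rightarrow> complex fls \<Rightarrow> rat \<Rightarrow> bool" where
  "nu_gt N c r \<longleftrightarrow> c = 0 \<or> of_int (fls_subdegree c) / of_nat N > r"

text \<open>val(w) >= r, resp. val(w) > r, for w in E, computed by writing w (viewed in
  C((t))[y]) in the basis eps_i: val(w) = inf_i nu(w_i).\<close>
definition val_ge :: "nat \<Rightarrow> nat \<Rightarrow> (nat \<Rightarrow> complex fls) \<Rightarrow> complex fls poly \<Rightarrow> rat \<Rightarrow> bool" where
  "val_ge N n a w r \<longleftrightarrow> (\<exists>c. map_poly (ramify N) w = (\<Sum>i<n. smult (c i) (eps n a i))
       \<and> (\<forall>i<n. nu_ge N (c i) r))"

definition val_gt :: "nat \<Rightarrow> nat \<Rightarrow> (nat \<Rightarrow> complex fls) \<Rightarrow> complex fls poly \<Rightarrow> rat \<Rightarrow> bool" where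
  "val_gt N n a w r \<longleftrightarrow> (\<exists>c. map_poly (ramify N) w = (\<Sum>i<n. smult (c i) (eps n a i))
       \<and> (\<forall>i<n. nu_gt N (c i) r))"

end

theory Submission
  imports Defs
begin

unbundle fps_syntax

text \<open>
  After the ramification \<open>x = t^N\<close> the polynomial \<open>f\<close> splits as \<open>P = \<Prod>\<^sub>i (y - a i)\<close> with
  distinct roots of positive order; \<open>f'\<^sub>y\<close> becomes \<open>P'\<close> and \<open>f'\<^sub>x\<close> becomes \<open>D(P)\<close>, the image of
  \<open>P\<close> under the derivation \<open>D = d/dx\<close> applied to the coefficients. Write \<open>u, v, w\<close> in the
  basis \<open>eps i\<close> with coordinates \<open>u i, v i, w i\<close>. Evaluating \<open>wP = u D(P) + v P'\<close> at the roots,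
  and then dividing it by \<open>P\<close>, gives
    \<open>v i = D (a i) * u i\<close>  and  \<open>w i = \<Sum>j \<noteq> i. (D (a i) - D (a j)) / (a i - a j) * (u i - u j)\<close>.
  If \<open>deg u < n - 1\<close> then \<open>\<Sum>i. u i = 0\<close>, and the leading coefficients of the \<open>w i\<close> form a
  weighted graph Laplacian, with positive weights \<open>ord (a i - a j)\<close>, of those of the \<open>u i\<close>, which
  cannot vanish on a nonzero vector with sum zero. Hence \<open>val w \<le> val u - 1\<close>. This gives the
  valuation bounds and, for \<open>w = 0\<close>, injectivity of \<open>(u, v) \<mapsto> u f'\<^sub>x + v f'\<^sub>y\<close>; counting
  dimensions, this map reaches every polynomial of degree \<open>< 2n - 1\<close>, in particular \<open>w f\<close>.
\<close>

section \<open>Polynomial maps induced by homomorphisms and derivations\<close>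

lemma hom_sum:
  assumes "h 0 = 0" "\<And>x y. h (x + y) = h x + h y"
  shows "h (sum f A) = (\<Sum>a\<in>A. h (f a))"
  by (induct A rule: infinite_finite_induct) (auto simp: assms)

lemma degree_map_poly_le: "h 0 = 0 \<Longrightarrow> degree (map_poly h p) \<le> degree p"
  by (rule degree_le) (simp add: coeff_map_poly coeff_eq_0)

lemma map_poly_hom_add:
  assumes "h 0 = 0" "\<And>x y. h (x + y) = h x + h y"
  shows "map_poly h (p + q) = map_poly h p + map_poly h q"
  by (intro poly_eqI) (simp add: coeff_map_poly assms)

lemma map_poly_hom_mult:
  fixes h :: "'a::comm_semiring_1 \<Rightarrow> 'b::comm_semiring_1"
  assumes "h 0 = 0" "\<And>x y. h (x + y) = h x + h y" "\<And>x y. h (x * y) = h x * h y"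
  shows "map_poly h (p * q) = map_poly h p * map_poly h q"
  by (intro poly_eqI) (simp add: coeff_map_poly coeff_mult assms hom_sum[of h])

lemma map_poly_hom_pderiv:
  fixes h :: "'a::idom \<Rightarrow> 'b::idom"
  assumes "h 0 = 0" "\<And>m x. h (of_nat m * x) = of_nat m * h x"
  shows "map_poly h (pderiv p) = pderiv (map_poly h p)"
  by (intro poly_eqI) (simp add: coeff_map_poly coeff_pderiv assms del: of_nat_Suc)

definition derivation :: "('a::comm_ring_1 \<Rightarrow> 'a) \<Rightarrow> bool" where
  "derivation D \<longleftrightarrow> (\<forall>x y. D (x + y) = D x + D y) \<and> (\<forall>x y. D (x * y) = x * D y + D x * y)"

lemma derivation_add: "derivation D \<Longrightarrow> D (x + y) = D x + D y"
  and derivation_mult: "derivation D \<Longrightarrow> D (x * y) = x * D y + D x * y"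
  by (simp_all add: derivation_def)

lemma derivation_0: "derivation D \<Longrightarrow> D 0 = 0"
  using derivation_add[of D 0 0] by simp

lemma derivation_1: "derivation D \<Longrightarrow> D 1 = 0"
  using derivation_mult[of D 1 1] by simp

lemma derivation_minus: "derivation D \<Longrightarrow> D (- x) = - D x"
  using derivation_add[of D x "- x"] derivation_0[of D]
  by (simp add: eq_neg_iff_add_eq_0 add.commute)

lemma derivation_diff: "derivation D \<Longrightarrow> D (x - y) = D x - D y"
  using derivation_add[of D x "- y"] derivation_minus[of D y] by simp

lemma map_poly_derivation_mult:
  assumes "derivation D"
  shows "map_poly D (p * q) = map_poly D p * q + p * map_poly D q"
proof (intro poly_eqI)
  fix m
  have "coeff (map_poly D (p * q)) m =
      (\<Sum>i\<le>m. coeff p i * D (coeff q (m - i)) + D (coeff p i) * coeff q (m - i))"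
    using assms by (simp add: coeff_map_poly coeff_mult derivation_0 derivation_mult
        hom_sum[of D] derivation_add)
  also have "\<dots> = coeff (map_poly D p * q + p * map_poly D q) m"
    using assms by (simp add: coeff_mult coeff_map_poly derivation_0 sum.distrib add.commute)
  finally show "coeff (map_poly D (p * q)) m = coeff (map_poly D p * q + p * map_poly D q) m" .
qed

lemma map_poly_derivation_prod:
  assumes "derivation D"
  shows "map_poly D (prod f A) = (\<Sum>a\<in>A. prod f (A - {a}) * map_poly D (f a))"
proof (induct A rule: infinite_finite_induct)
  case (insert a A)
  have "prod f (insert a A - {b}) = f a * prod f (A - {b})" if "b \<in> A" for b
    using insert(1,2) that by (auto simp: insert_Diff_if)
  then show ?case
    using insert
    by (simp add: map_poly_derivation_mult[OF assms] sum_distrib_left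
        insert_Diff_if ac_simps cong: sum.cong)
qed (simp_all add: map_poly_1 derivation_1[OF assms])

section \<open>Injective linear maps on polynomials of bounded degree\<close>

interpretation poly_vs: vector_space "smult :: 'a::field \<Rightarrow> 'a poly \<Rightarrow> 'a poly"
  by unfold_locales (simp_all add: smult_add_right smult_add_left)

lemma span_monoms:
  assumes "m > 0"
  shows "poly_vs.span (monom (1::'a::field) ` {..<m}) = {p. degree p < m}"
proof (intro equalityI subsetI)
  have subspace: "poly_vs.subspace {p :: 'a poly. degree p < m}"
    using assms unfolding poly_vs.subspace_def
    by (auto intro: degree_add_less le_less_trans[OF degree_smult_le])
  have "monom 1 ` {..<m} \<subseteq> {p :: 'a poly. degree p < m}"
    by (auto simp: degree_monom_eq)
  from poly_vs.span_minimal[OF this subspace]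
  show "p \<in> {p. degree p < m}" if "p \<in> poly_vs.span (monom 1 ` {..<m})" for p :: "'a poly"
    using that by (rule subsetD)
next
  fix p :: "'a poly"
  assume "p \<in> {p. degree p < m}"
  then have "p = (\<Sum>i\<le>m - 1. smult (coeff p i) (monom 1 i))"
    by (subst poly_as_sum_of_monoms'[of p "m - 1", symmetric]) (auto simp: smult_monom)
  also have "\<dots> \<in> poly_vs.span (monom 1 ` {..<m})"
    using assms by (intro poly_vs.span_sum poly_vs.span_scale poly_vs.span_base) auto
  finally show "p \<in> poly_vs.span (monom 1 ` {..<m})" .
qed

lemma independent_monoms: "poly_vs.independent (monom (1::'a::field) ` {..<m})"
  unfolding poly_vs.independent_explicit_module
proof (intro allI impI)
  fix t u v
  assume t: "finite t" "t \<subseteq> monom (1::'a) ` {..<m}"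
    and sum: "(\<Sum>v\<in>t. smult (u v) v) = 0" and v: "v \<in> t"
  obtain i where i: "v = monom 1 i"
    using v t by auto
  have "(\<Sum>w\<in>t. u w * coeff w i) = u v"
    using t v i
    by (subst sum.remove[of _ v])
      (auto intro!: sum.neutral dest!: subsetD[OF t(2)] split: if_splits)
  moreover have "(\<Sum>w\<in>t. u w * coeff w i) = 0"
    using arg_cong[OF sum, of "\<lambda>p. coeff p i"] by (simp add: coeff_sum)
  ultimately show "u v = 0" by simp
qed

lemma bounded_degree_inj_imp_surj:
  fixes T :: "'a::field poly \<Rightarrow> 'a poly"
  assumes add: "\<And>p q. T (p + q) = T p + T q" and smult: "\<And>c p. T (smult c p) = smult c (T p)"
    and into: "\<And>p. degree p < m \<Longrightarrow> degree (T p) < m"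
    and inj: "\<And>p. degree p < m \<Longrightarrow> T p = 0 \<Longrightarrow> p = 0"
    and "m > 0" and "degree q < m"
  shows "\<exists>p. degree p < m \<and> T p = q"
proof -
  define B where "B = monom (1::'a) ` {..<m}"
  have span_B: "poly_vs.span B = {p. degree p < m}"
    unfolding B_def using \<open>m > 0\<close> by (rule span_monoms)
  have hom: "module_hom smult smult T"
    using add smult by unfold_locales
  have inj_T: "inj_on T (poly_vs.span B)"
  proof (rule inj_onI)
    fix p p' assume "p \<in> poly_vs.span B" "p' \<in> poly_vs.span B" "T p = T p'"
    moreover from this have "T (p - p') = 0"
      using add[of "p - p'" p'] by simp
    ultimately show "p = p'"
      using inj[of "p - p'"] degree_diff_le_max[of p p'] span_B by fastforce
  qed
  have indep: "poly_vs.independent (T ` B)"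
    using module_hom.independent_injective_image[OF hom, of B] independent_monoms inj_T
    unfolding B_def by blast
  have card_B: "card B = m"
    unfolding B_def by (subst card_image) (auto intro: inj_onI simp: monom_eq_iff')
  have card_TB: "card (T ` B) = m"
    using card_image[OF inj_on_subset[OF inj_T poly_vs.span_superset]] card_B by simp
  have TB_sub: "T ` B \<subseteq> poly_vs.span B"
    using into poly_vs.span_superset[of B] span_B by blast
  \<comment> \<open>otherwise \<open>insert q (T ` B)\<close> would be \<open>m + 1\<close> independent vectors in \<open>span B\<close>\<close>
  have "q \<in> poly_vs.span (T ` B)"
  proof (rule ccontr)
    assume q: "q \<notin> poly_vs.span (T ` B)"
    then have "poly_vs.dim (insert q (T ` B)) = m + 1"
      using indep card_TB poly_vs.span_superset[of "T ` B"] poly_vs.independent_insertI[OF q indep]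
      by (subst poly_vs.dim_eq_card_independent) (auto simp: card_insert_if B_def)
    moreover have "poly_vs.dim (insert q (T ` B)) \<le> m"
      using poly_vs.dim_le_card[of "insert q (T ` B)" B] TB_sub \<open>degree q < m\<close> span_B card_B
      unfolding B_def by auto
    ultimately show False by simp
  qed
  then show ?thesis
    using module_hom.span_image[OF hom, of B] span_B by auto
qed

lemma poly_cutoff_add: "poly_cutoff k (p + q) = poly_cutoff k p + poly_cutoff k q"
  by (intro poly_eqI) (simp add: coeff_poly_cutoff)

lemma poly_cutoff_smult: "poly_cutoff k (smult c p) = smult c (poly_cutoff k p)"
  by (intro poly_eqI) (simp add: coeff_poly_cutoff)

lemma poly_shift_add: "poly_shift k (p + q) = poly_shift k p + poly_shift k q"
  by (intro poly_eqI) (simp add: coeff_poly_shift)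

lemma poly_shift_smult: "poly_shift k (smult c p) = smult c (poly_shift k p)"
  by (intro poly_eqI) (simp add: coeff_poly_shift)

lemma degree_poly_cutoff_less: "k > 0 \<Longrightarrow> degree (poly_cutoff k p) < k"
  by (rule degree_lessI) (auto simp: coeff_poly_cutoff)

lemma degree_poly_shift_le: "degree (poly_shift k p) \<le> degree p - k"
  by (rule degree_le) (simp add: coeff_poly_shift coeff_eq_0)

lemma poly_cutoff_shift_eq_0: "poly_cutoff k p = 0 \<Longrightarrow> poly_shift k p = 0 \<Longrightarrow> p = 0"
proof (intro poly_eqI)
  fix j
  assume "poly_cutoff k p = 0" "poly_shift k p = 0"
  then have "coeff (poly_cutoff k p) j = 0" "coeff (poly_shift k p) (j - k) = 0"
    by simp_all
  then show "coeff p j = coeff 0 j"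
    by (cases "j < k") (auto simp: coeff_poly_cutoff coeff_poly_shift)
qed

section \<open>The Lagrange basis of the roots\<close>

definition root_prod :: "nat \<Rightarrow> (nat \<Rightarrow> complex fls) \<Rightarrow> complex fls poly" where
  "root_prod n a = (\<Prod>k<n. [:- a k, 1:])"

definition eps_pair :: "nat \<Rightarrow> (nat \<Rightarrow> complex fls) \<Rightarrow> nat \<Rightarrow> nat \<Rightarrow> complex fls poly" where
  "eps_pair n a i j = (\<Prod>k\<in>{..<n} - {i, j}. [:- a k, 1:])"

definition eps_diag :: "nat \<Rightarrow> (nat \<Rightarrow> complex fls) \<Rightarrow> nat \<Rightarrow> complex fls" where
  "eps_diag n a i = poly (eps n a i) (a i)"

lemma poly_eps_other_root: "k < n \<Longrightarrow> k \<noteq> i \<Longrightarrow> poly (eps n a i) (a k) = 0"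
  unfolding eps_def poly_prod by (rule prod_zero) auto

lemma poly_eps_pair_other_root:
  "k < n \<Longrightarrow> k \<noteq> i \<Longrightarrow> k \<noteq> j \<Longrightarrow> poly (eps_pair n a i j) (a k) = 0"
  unfolding eps_pair_def poly_prod by (rule prod_zero) auto

lemma degree_eps: "i < n \<Longrightarrow> degree (eps n a i) = n - 1"
  unfolding eps_def by (subst degree_prod_sum_eq) auto

lemma lead_coeff_eps: "lead_coeff (eps n a i) = 1"
  unfolding eps_def lead_coeff_prod by simp

lemma root_prod_eq_eps: "i < n \<Longrightarrow> root_prod n a = [:- a i, 1:] * eps n a i"
  unfolding root_prod_def eps_def by (subst prod.remove[of _ i]) auto

lemma eps_eq_eps_pair:
  "j < n \<Longrightarrow> i \<noteq> j \<Longrightarrow> eps n a i = [:- a j, 1:] * eps_pair n a i j"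
  unfolding eps_def eps_pair_def
  by (subst prod.remove[of _ j]) (auto simp: insert_commute Diff_insert2[symmetric])

lemma eps_pair_commute: "eps_pair n a i j = eps_pair n a j i"
  unfolding eps_pair_def by (simp add: insert_commute)

lemma eps_mult_eps:
  assumes "i < n" "j < n" "i \<noteq> j"
  shows "eps n a i * eps n a j = root_prod n a * eps_pair n a i j"
proof -
  have "eps n a i * eps n a j =
      ([:- a j, 1:] * eps_pair n a i j) * ([:- a i, 1:] * eps_pair n a i j)"
    using assms eps_eq_eps_pair[of j n i a] eps_eq_eps_pair[of i n j a]
      eps_pair_commute[of n a j i] by simp
  also have "\<dots> = ([:- a i, 1:] * ([:- a j, 1:] * eps_pair n a i j)) * eps_pair n a i j"
    by (simp only: ac_simps)
  finally show ?thesis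
    using assms eps_eq_eps_pair[of j n i a] root_prod_eq_eps[of i n a] by simp
qed

lemma poly_root_prod_root: "k < n \<Longrightarrow> poly (root_prod n a) (a k) = 0"
  by (simp add: root_prod_eq_eps)

lemma degree_root_prod: "degree (root_prod n a) = n"
  unfolding root_prod_def by (subst degree_prod_sum_eq) auto

lemma lead_coeff_root_prod: "lead_coeff (root_prod n a) = 1"
  unfolding root_prod_def lead_coeff_prod by simp

lemma root_prod_nonzero: "root_prod n a \<noteq> 0"
  unfolding root_prod_def by (simp add: prod_zero_iff)

lemma pderiv_root_prod: "pderiv (root_prod n a) = (\<Sum>i<n. eps n a i)"
  unfolding root_prod_def eps_def pderiv_prod by (simp add: pderiv_pCons)

lemma map_poly_derivation_root_prod:
  assumes "derivation D"
  shows "map_poly D (root_prod n a) = (\<Sum>i<n. smult (- D (a i)) (eps n a i))"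
proof -
  have "map_poly D [:- a k, 1:] = [:- D (a k):]" for k
    using assms by (simp add: map_poly_pCons derivation_0 derivation_1 derivation_minus)
  then show ?thesis
    unfolding root_prod_def map_poly_derivation_prod[OF assms] eps_def
    by (simp add: mult.commute)
qed

lemma poly_eps_combination:
  "k < n \<Longrightarrow> poly (\<Sum>i<n. smult (c i) (eps n a i)) (a k) = c k * eps_diag n a k"
  unfolding eps_diag_def poly_sum
  by (subst sum.remove[of _ k]) (auto simp: poly_eps_other_root intro!: sum.neutral)

lemma degree_eps_combination: "n > 0 \<Longrightarrow> degree (\<Sum>i<n. smult (c i) (eps n a i)) < n"
  by (intro degree_sum_less) (auto intro: le_less_trans[OF degree_smult_le] simp: degree_eps)

lemma coeff_eps_combination_top:
  "coeff (\<Sum>i<n. smult (c i) (eps n a i)) (n - 1) = (\<Sum>i<n. c i)"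
proof -
  have "coeff (eps n a i) (n - 1) = 1" if "i < n" for i
    using degree_eps[OF that, of a] lead_coeff_eps[of n a i] by simp
  then show ?thesis
    by (simp add: coeff_sum)
qed

definition root_laplacian :: "(complex fls \<Rightarrow> complex fls) \<Rightarrow> nat \<Rightarrow> (nat \<Rightarrow> complex fls) \<Rightarrow>
    (nat \<Rightarrow> complex fls) \<Rightarrow> nat \<Rightarrow> complex fls" where
  "root_laplacian D n a c k =
    (\<Sum>j\<in>{..<n} - {k}. (D (a k) - D (a j)) / (a k - a j) * (c k - c j))"

context
  fixes n :: nat and a :: "nat \<Rightarrow> complex fls"
  assumes inj: "inj_on a {..<n}"
begin

lemma root_diff_nonzero: "i < n \<Longrightarrow> j < n \<Longrightarrow> i \<noteq> j \<Longrightarrow> a i - a j \<noteq> 0"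
  using inj by (auto simp: inj_on_def)

lemma eps_diag_nonzero: "i < n \<Longrightarrow> eps_diag n a i \<noteq> 0"
  unfolding eps_diag_def eps_def poly_prod using root_diff_nonzero by auto

lemma poly_eps_pair_root:
  assumes "k < n" "j < n" "k \<noteq> j"
  shows "poly (eps_pair n a k j) (a k) = eps_diag n a k / (a k - a j)"
proof -
  have "eps_diag n a k = (a k - a j) * poly (eps_pair n a k j) (a k)"
    unfolding eps_diag_def eps_eq_eps_pair[OF assms(2,3)] by (simp add: algebra_simps)
  then show ?thesis
    using root_diff_nonzero[OF assms] by simp
qed

lemma eps_coords_unique:
  "p = (\<Sum>i<n. smult (c i) (eps n a i)) \<Longrightarrow> k < n \<Longrightarrow> c k = poly p (a k) / eps_diag n a k"
  using poly_eps_combination eps_diag_nonzero by simp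

lemma lagrange_interpolation:
  assumes "degree p < n"
  shows "p = (\<Sum>i<n. smult (poly p (a i) / eps_diag n a i) (eps n a i))"
proof (rule poly_eqI_degree[of "a ` {..<n}"])
  have card: "card (a ` {..<n}) = n"
    using inj by (simp add: card_image)
  then show "degree p < card (a ` {..<n})"
    using assms by simp
  show "degree (\<Sum>i<n. smult (poly p (a i) / eps_diag n a i) (eps n a i)) < card (a ` {..<n})"
    using card assms degree_eps_combination by simp
next
  fix x
  assume "x \<in> a ` {..<n}"
  then obtain k where k: "k < n" and x: "x = a k"
    by blast
  show "poly p x = poly (\<Sum>i<n. smult (poly p (a i) / eps_diag n a i) (eps n a i)) x"
    using poly_eps_combination[OF k, of "\<lambda>i. poly p (a i) / eps_diag n a i" a]
      eps_diag_nonzero[OF k]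
    by (simp add: x)
qed

lemma poly_eps_pair_sum_root:
  assumes k: "k < n" and diag: "\<And>i. c i i = 0"
  shows "poly (\<Sum>i<n. \<Sum>j<n. smult (c i j) (eps_pair n a i j)) (a k) =
    eps_diag n a k * (\<Sum>j\<in>{..<n} - {k}. (c k j + c j k) / (a k - a j))"
proof -
  define T where "T i j = c i j * poly (eps_pair n a i j) (a k)" for i j
  have T_other: "T i j = 0" if "i \<noteq> k" "j \<noteq> k" for i j
    using diag k that unfolding T_def by (cases "i = j") (auto simp: poly_eps_pair_other_root)
  have "poly (\<Sum>i<n. \<Sum>j<n. smult (c i j) (eps_pair n a i j)) (a k) = (\<Sum>i<n. \<Sum>j<n. T i j)"
    unfolding T_def by (simp add: poly_sum)
  also have "\<dots> = (\<Sum>j\<in>{..<n} - {k}. T k j) + (\<Sum>i\<in>{..<n} - {k}. T i k)"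
    using k T_other diag
    by (simp add: sum.remove[of "{..<n}" k] sum.swap[of _ "{..<n} - {k}"] T_def
        sum.neutral[of "{..<n} - {k}"])
  also have "\<dots> = (\<Sum>j\<in>{..<n} - {k}. eps_diag n a k * ((c k j + c j k) / (a k - a j)))"
    unfolding sum.distrib[symmetric] T_def
    using k by (intro sum.cong)
      (auto simp: poly_eps_pair_root eps_pair_commute[of n a _ k] add_divide_distrib algebra_simps)
  finally show ?thesis
    by (simp add: sum_distrib_left)
qed

context
  fixes D :: "complex fls \<Rightarrow> complex fls" and u v w :: "complex fls poly"
    and uc vc :: "nat \<Rightarrow> complex fls"
  assumes D: "derivation D"
    and u: "u = (\<Sum>i<n. smult (uc i) (eps n a i))"
    and v: "v = (\<Sum>i<n. smult (vc i) (eps n a i))"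
    and syzygy: "w * root_prod n a = u * map_poly D (root_prod n a) + v * pderiv (root_prod n a)"
begin

lemma syzygy_coord_right:
  assumes k: "k < n"
  shows "vc k = D (a k) * uc k"
proof -
  have "poly (map_poly D (root_prod n a)) (a k) = - D (a k) * eps_diag n a k"
    unfolding map_poly_derivation_root_prod[OF D] by (rule poly_eps_combination[OF k])
  moreover have "poly (pderiv (root_prod n a)) (a k) = 1 * eps_diag n a k"
    using poly_eps_combination[OF k, of "\<lambda>_. 1" a] by (simp add: pderiv_root_prod)
  ultimately have "eps_diag n a k * eps_diag n a k * (vc k - D (a k) * uc k) = 0"
    using arg_cong[OF syzygy, of "\<lambda>p. poly p (a k)"] poly_eps_combination[OF k]
    by (auto simp: u v poly_root_prod_root[OF k] algebra_simps)
  then show ?thesis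
    using eps_diag_nonzero[OF k] by simp
qed

lemma syzygy_quotient:
  "w = (\<Sum>i<n. \<Sum>j<n. smult ((D (a i) - D (a j)) * uc i) (eps_pair n a i j))"
proof -
  have "u * map_poly D (root_prod n a) + v * pderiv (root_prod n a) =
      (\<Sum>i<n. \<Sum>j<n. smult ((D (a i) - D (a j)) * uc i) (eps n a i * eps n a j))"
    unfolding map_poly_derivation_root_prod[OF D] pderiv_root_prod u v sum_product
      sum.distrib[symmetric]
    by (intro sum.cong refl)
       (simp add: syzygy_coord_right mult_smult_left mult_smult_right smult_add_left[symmetric]
         algebra_simps)
  also have "\<dots> =
      root_prod n a * (\<Sum>i<n. \<Sum>j<n. smult ((D (a i) - D (a j)) * uc i) (eps_pair n a i j))"
    unfolding sum_distrib_left
  proof (intro sum.cong refl)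
    fix i j
    assume "i \<in> {..<n}" "j \<in> {..<n}"
    \<comment> \<open>diagonal terms vanish, and for \<open>i \<noteq> j\<close> the product \<open>eps i * eps j\<close> is divisible by \<open>P\<close>\<close>
    then show "smult ((D (a i) - D (a j)) * uc i) (eps n a i * eps n a j) =
        root_prod n a * smult ((D (a i) - D (a j)) * uc i) (eps_pair n a i j)"
      by (cases "i = j") (simp_all add: eps_mult_eps mult_smult_right)
  qed
  finally show ?thesis
    using syzygy root_prod_nonzero by (simp add: mult.commute)
qed

lemma syzygy_coord_left:
  assumes w: "w = (\<Sum>i<n. smult (wc i) (eps n a i))" and k: "k < n"
  shows "wc k = root_laplacian D n a uc k"
proof -
  have "wc k * eps_diag n a k = poly w (a k)"
    using poly_eps_combination[OF k] by (simp add: w)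
  also have "\<dots> = eps_diag n a k *
      (\<Sum>j\<in>{..<n} - {k}. ((D (a k) - D (a j)) * uc k + (D (a j) - D (a k)) * uc j) / (a k - a j))"
    by (subst syzygy_quotient) (rule poly_eps_pair_sum_root[OF k], simp)
  also have "\<dots> = eps_diag n a k *
      (\<Sum>j\<in>{..<n} - {k}. (D (a k) - D (a j)) / (a k - a j) * (uc k - uc j))"
    by (simp add: algebra_simps add_divide_distrib diff_divide_distrib)
  finally show ?thesis
    using eps_diag_nonzero[OF k] by (simp add: root_laplacian_def mult.commute)
qed

end

end

section \<open>Orders of Laurent series\<close>

definition fls_order_ge :: "'a::zero fls \<Rightarrow> int \<Rightarrow> bool" where
  "fls_order_ge z M \<longleftrightarrow> (\<forall>k<M. z $$ k = 0)"

lemma fls_order_ge_0 [simp]: "fls_order_ge 0 M"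
  by (simp add: fls_order_ge_def)

lemma fls_order_ge_diff:
  "fls_order_ge a M \<Longrightarrow> fls_order_ge b M \<Longrightarrow> fls_order_ge (a - b :: 'a::ab_group_add fls) M"
  by (simp add: fls_order_ge_def)

lemma fls_order_ge_iff_subdegree: "z \<noteq> 0 \<Longrightarrow> fls_order_ge z M \<longleftrightarrow> M \<le> fls_subdegree z"
  by (auto simp: fls_order_ge_def intro: fls_subdegree_geI)

lemma fls_order_ge_subdegree: "fls_order_ge z (fls_subdegree z)"
  by (simp add: fls_order_ge_def)

lemma fls_order_ge_mult:
  fixes a b :: "'a::comm_ring_1 fls"
  assumes "fls_order_ge a A" "fls_order_ge b B"
  shows "fls_order_ge (a * b) (A + B) \<and> (a * b) $$ (A + B) = a $$ A * b $$ B"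
proof (cases "a = 0 \<or> b = 0")
  case False
  then have A: "A \<le> fls_subdegree a" and B: "B \<le> fls_subdegree b"
    using assms fls_order_ge_iff_subdegree by blast+
  then have order: "fls_order_ge (a * b) (A + B)"
    unfolding fls_order_ge_def by (auto intro: fls_times_nth_eq0)
  show ?thesis
  proof (cases "A = fls_subdegree a \<and> B = fls_subdegree b")
    case True
    then show ?thesis
      using order fls_times_base[of a b] by simp
  next
    case False
    then have "a $$ A = 0 \<or> b $$ B = 0"
      using A B by auto
    moreover have "(a * b) $$ (A + B) = 0"
      using A B False by (intro fls_times_nth_eq0) auto
    ultimately show ?thesis
      using order by auto
  qed
qed auto

lemma fls_order_ge_power:
  fixes a :: "'a::comm_ring_1 fls"
  assumes "fls_order_ge a A"
  shows "fls_order_ge (a ^ k) (int k * A) \<and> (a ^ k) $$ (int k * A) = (a $$ A) ^ k"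
proof (induction k)
  case (Suc k)
  have "int (Suc k) * A = A + int k * A"
    by (simp add: algebra_simps)
  then show ?case
    using fls_order_ge_mult[OF assms Suc[THEN conjunct1]] Suc[THEN conjunct2] by simp
qed (simp add: fls_order_ge_def)

text \<open>If \<open>z\<close> had order \<open>s \<le> 0\<close>, the term \<open>z\<^sup>d\<close> alone would contribute to the coefficient of
  order \<open>d s\<close> of \<open>P(z)\<close>.\<close>

lemma monic_root_order_pos:
  fixes P :: "'a::idom fls poly" and z :: "'a fls"
  assumes root: "poly P z = 0" and monic: "lead_coeff P = 1"
    and low: "\<And>k. k < degree P \<Longrightarrow> fls_order_ge (coeff P k) 1"
  shows "fls_order_ge z 1"
proof (rule ccontr)
  assume not_pos: "\<not> fls_order_ge z 1"
  then have "z \<noteq> 0"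
    by auto
  define s where "s = fls_subdegree z"
  define d where "d = degree P"
  have "s \<le> 0"
    using not_pos fls_order_ge_iff_subdegree[OF \<open>z \<noteq> 0\<close>] unfolding s_def by simp
  have z_s: "fls_order_ge z s"
    unfolding s_def by (rule fls_order_ge_subdegree)
  have lower: "(coeff P k * z ^ k) $$ (int d * s) = 0" if "k < d" for k
  proof -
    have "fls_order_ge (coeff P k * z ^ k) (1 + int k * s)"
      using fls_order_ge_mult[OF low fls_order_ge_power[OF z_s, THEN conjunct1]] that
      unfolding d_def by blast
    moreover have "int d * s \<le> int k * s"
      using that \<open>s \<le> 0\<close> by (intro mult_right_mono_neg) auto
    ultimately show ?thesis
      unfolding fls_order_ge_def by simp
  qed
  have "0 = (\<Sum>k\<le>d. coeff P k * z ^ k) $$ (int d * s)"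
    using root by (simp add: poly_altdef d_def)
  also have "\<dots> = (coeff P d * z ^ d) $$ (int d * s)"
    using lower by (simp add: fls_nth_sum lessThan_Suc_atMost[symmetric])
  also have "\<dots> = (z $$ s) ^ d"
    using monic fls_order_ge_power[OF z_s, of d] unfolding d_def by simp
  finally show False
    using \<open>z \<noteq> 0\<close> unfolding s_def by simp
qed

lemma nu_ge_if_order_ge:
  "N > 0 \<Longrightarrow> fls_order_ge c M \<Longrightarrow> r * of_nat N \<le> of_int M \<Longrightarrow> nu_ge N c r"
  unfolding nu_ge_def
  by (cases "c = 0") (auto simp: fls_order_ge_iff_subdegree pos_le_divide_eq
      intro: order_trans[OF _ of_int_le_iff[THEN iffD2]])

lemma nu_gt_if_order_ge:
  "N > 0 \<Longrightarrow> fls_order_ge c M \<Longrightarrow> r * of_nat N < of_int M \<Longrightarrow> nu_gt N c r"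
  unfolding nu_gt_def
  by (cases "c = 0") (auto simp: fls_order_ge_iff_subdegree pos_less_divide_eq
      intro: less_le_trans[OF _ of_int_le_iff[THEN iffD2]])

lemma nu_ge_imp_le_nonzero_nth:
  assumes "N > 0" "nu_ge N c r" and nth: "c $$ M \<noteq> 0"
  shows "r * of_nat N \<le> of_int M"
proof -
  from assms have "r * of_nat N \<le> of_int (fls_subdegree c)"
    unfolding nu_ge_def by (auto simp: pos_le_divide_eq)
  also have "\<dots> \<le> of_int M"
    using fls_subdegree_leI[OF nth] by simp
  finally show ?thesis .
qed

lemma fls_order_ge_min_exists:
  fixes c :: "nat \<Rightarrow> 'a::zero fls"
  assumes "k0 < n" "c k0 \<noteq> 0"
  shows "\<exists>M. (\<forall>k<n. fls_order_ge (c k) M) \<and> (\<exists>k<n. c k $$ M \<noteq> 0)"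
proof -
  define S where "S = (\<lambda>k. fls_subdegree (c k)) ` {k \<in> {..<n}. c k \<noteq> 0}"
  have "finite S"
    unfolding S_def by (rule finite_imageI) simp
  moreover have "S \<noteq> {}"
    using assms unfolding S_def by auto
  ultimately have "Min S \<in> S"
    by (rule Min_in)
  then obtain k where k: "k \<in> {k \<in> {..<n}. c k \<noteq> 0}" "Min S = fls_subdegree (c k)"
    unfolding S_def by (rule imageE)
  have "fls_order_ge (c j) (Min S)" if "j < n" for j
  proof (cases "c j = 0")
    case False
    then have "Min S \<le> fls_subdegree (c j)"
      using \<open>finite S\<close> that unfolding S_def by (intro Min_le) auto
    then show ?thesis
      using False by (simp add: fls_order_ge_iff_subdegree)
  qed simp
  moreover have "c k $$ Min S \<noteq> 0"
    using k by simp
  ultimately show ?thesis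
    using k(1) by blast
qed

section \<open>A discrete maximum principle\<close>

text \<open>At a maximum of a non-constant \<open>g\<close> the weighted Laplacian is positive.\<close>

lemma weighted_laplacian_nonzero_real:
  fixes g :: "nat \<Rightarrow> real" and q :: "nat \<Rightarrow> nat \<Rightarrow> real"
  assumes q: "\<And>k j. k < n \<Longrightarrow> j < n \<Longrightarrow> k \<noteq> j \<Longrightarrow> q k j > 0"
    and nonconst: "i < n" "j < n" "g i \<noteq> g j"
  shows "\<exists>k<n. (\<Sum>j\<in>{..<n} - {k}. q k j * (g k - g j)) \<noteq> 0"
proof -
  have "Max (g ` {..<n}) \<in> g ` {..<n}"
    using nonconst(1) by (intro Max_in) auto
  then obtain k where k: "k < n" "g k = Max (g ` {..<n})"
    by (metis imageE lessThan_iff)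
  have max: "g j \<le> g k" if "j < n" for j
    unfolding k(2) using that by (intro Max_ge) auto
  have "g i < g k \<or> g j < g k"
    using max[OF nonconst(1)] max[OF nonconst(2)] nonconst(3) by linarith
  then obtain j0 where j0: "j0 < n" "g j0 < g k"
    using nonconst(1,2) by blast
  have "0 < (\<Sum>j\<in>{..<n} - {k}. q k j * (g k - g j))"
  proof (rule sum_pos2[of _ j0])
    show "0 < q k j0 * (g k - g j0)"
      using q[OF k(1) j0(1)] j0(2) by (auto simp: zero_less_mult_iff)
    show "0 \<le> q k j * (g k - g j)" if "j \<in> {..<n} - {k}" for j
      using q[of k j] k(1) max[of j] that by auto
  qed (use j0 in auto)
  then show ?thesis
    using k(1) by auto
qed

lemma weighted_laplacian_nonzero:
  fixes lam :: "nat \<Rightarrow> complex" and q :: "nat \<Rightarrow> nat \<Rightarrow> real"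
  assumes q: "\<And>k j. k < n \<Longrightarrow> j < n \<Longrightarrow> k \<noteq> j \<Longrightarrow> q k j > 0"
    and sum: "(\<Sum>k<n. lam k) = 0" and nonzero: "k0 < n" "lam k0 \<noteq> 0"
  shows "\<exists>k<n. (\<Sum>j\<in>{..<n} - {k}. of_real (q k j) * (lam k - lam j)) \<noteq> 0"
proof -
  obtain i j where ij: "i < n" "j < n" "lam i \<noteq> lam j"
  proof (rule ccontr)
    assume "\<not> thesis"
    then have "(\<Sum>k<n. lam k) = (\<Sum>k<n. lam k0)"
      using that nonzero by (intro sum.cong) auto
    then show False
      using sum nonzero by simp
  qed
  then obtain h :: "complex \<Rightarrow> real" where h: "h = Re \<or> h = Im" "h (lam i) \<noteq> h (lam j)"
    using complex_eqI by blast
  then obtain k where k: "k < n"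
    and "(\<Sum>j\<in>{..<n} - {k}. q k j * (h (lam k) - h (lam j))) \<noteq> 0"
    using weighted_laplacian_nonzero_real[where g = "\<lambda>k. h (lam k)" and q = q, OF q ij(1,2)]
    by blast
  moreover have "h (\<Sum>j\<in>{..<n} - {k}. of_real (q k j) * (lam k - lam j)) =
      (\<Sum>j\<in>{..<n} - {k}. q k j * (h (lam k) - h (lam j)))"
    using h(1) by auto
  ultimately show ?thesis
    using k h(1) by (metis zero_complex.sel)
qed

section \<open>The derivation d/dx on ramified Laurent series\<close>

text \<open>With \<open>x = t^N\<close>, the derivation \<open>d/dx = t^(1 - N) / N \<cdot> d/dt\<close> on Laurent series in \<open>t\<close>.\<close>

definition ramified_deriv :: "nat \<Rightarrow> complex fls \<Rightarrow> complex fls" where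
  "ramified_deriv N z = fls_const (inverse (of_nat N)) * fls_shift (int N - 1) (fls_deriv z)"

lemma derivation_ramified_deriv: "derivation (ramified_deriv N)"
  unfolding derivation_def ramified_deriv_def
  by (simp add: fls_shifted_times_simps algebra_simps)

lemma ramified_deriv_nth:
  "ramified_deriv N z $$ k = inverse (of_nat N) * (of_int (k + int N) * z $$ (k + int N))"
  by (simp add: ramified_deriv_def algebra_simps)

lemma fls_order_ge_ramified_deriv:
  "fls_order_ge z A \<Longrightarrow> fls_order_ge (ramified_deriv N z) (A - int N)"
  unfolding fls_order_ge_def ramified_deriv_nth by simp

lemma ramified_deriv_compose:
  assumes N: "N > 0"
  shows "ramified_deriv N (fps_to_fls (c oo fps_X ^ N)) = fps_to_fls (fps_deriv c oo fps_X ^ N)"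
proof -
  define G where "G = fps_to_fls (fps_deriv c oo fps_X ^ N)"
  have "fps_deriv (c oo fps_X ^ N) = (fps_deriv c oo fps_X ^ N) * fps_deriv (fps_X ^ N)"
    using N by (intro fps_compose_deriv) simp
  also have "fps_deriv (fps_X ^ N :: complex fps) = fps_const (of_nat N) * fps_X ^ (N - 1)"
    using fps_deriv_power'[of "fps_X::complex fps" N] by (simp add: fps_of_nat)
  finally have "fls_deriv (fps_to_fls (c oo fps_X ^ N)) =
      fls_const (of_nat N) * fls_shift (- int (N - 1)) G"
    unfolding G_def fls_deriv_fps_to_fls
    by (simp add: fls_times_fps_to_fls fps_to_fls_power fls_X_power_times_conv_shift
        fls_shifted_times_simps mult.commute)
  then show ?thesis
    using N unfolding ramified_deriv_def G_def
    by (simp add: fls_shifted_times_simps mult.assoc[symmetric])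
qed

lemma fls_X_times_deriv_nth: "(fls_X * fls_deriv z) $$ m = of_int m * z $$ m"
  by (simp add: fls_X_times_conv_shift)

lemma fls_log_deriv:
  fixes d :: "complex fls"
  assumes d0: "d \<noteq> 0"
  shows "fls_order_ge ((fls_X * fls_deriv d) / d) 0 \<and>
    ((fls_X * fls_deriv d) / d) $$ 0 = of_int (fls_subdegree d)"
proof -
  define s where "s = fls_subdegree d"
  define th where "th = fls_X * fls_deriv d"
  define rho where "rho = th / d"
  have rho_d: "rho * d = th"
    unfolding rho_def using d0 by simp
  have th_s: "th $$ s = of_int s * d $$ s"
    unfolding th_def by (rule fls_X_times_deriv_nth)
  have d_s: "d $$ s \<noteq> 0"
    unfolding s_def using d0 by simp
  show ?thesis
  proof (cases "rho = 0")
    case True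
    then have "s = 0"
      using rho_d th_s d_s by simp
    then show ?thesis
      using True unfolding th_def[symmetric] rho_def[symmetric] s_def[symmetric] by simp
  next
    case False
    have "fls_order_ge th s"
      unfolding fls_order_ge_def th_def fls_X_times_deriv_nth s_def by simp
    then have "s \<le> fls_subdegree rho + s"
      using rho_d False d0 fls_order_ge_iff_subdegree[of th s] unfolding s_def by auto
    then have rho_ge: "fls_order_ge rho 0"
      using fls_order_ge_iff_subdegree[OF False] by simp
    have "rho $$ 0 * d $$ s = of_int s * d $$ s"
      using fls_order_ge_mult[OF rho_ge fls_order_ge_subdegree[of d]] rho_d th_s
      unfolding s_def by (simp only: add_0)
    then show ?thesis
      using rho_ge d_s unfolding rho_def th_def s_def by simp
  qed
qed

lemma fls_X_power_times_ramified_deriv: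
  assumes "N > 0"
  shows "fls_X ^ N * ramified_deriv N z = fls_const (inverse (of_nat N)) * (fls_X * fls_deriv z)"
proof -
  have "fls_X ^ N * fls_shift (int N - 1) (fls_deriv z) = fls_X * fls_deriv z"
    using assms by (simp add: fls_X_power_times_conv_shift fls_X_times_conv_shift)
  then show ?thesis
    unfolding ramified_deriv_def by (metis mult.left_commute)
qed

lemma ramified_deriv_quotient_nth:
  assumes N: "N > 0" and d: "d \<noteq> 0" and c: "fls_order_ge c M"
  shows "(ramified_deriv N d / d * c) $$ (M - int N) =
    of_int (fls_subdegree d) / of_nat N * c $$ M"
proof -
  define rho where "rho = (fls_X * fls_deriv d) / d"
  have rho_c: "(rho * c) $$ M = of_int (fls_subdegree d) * c $$ M"
    using fls_order_ge_mult[of rho 0 c M] fls_log_deriv[OF d] c unfolding rho_def by simp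
  have "(ramified_deriv N d / d * c) $$ (M - int N) =
      (fls_X ^ N * (ramified_deriv N d / d * c)) $$ M"
    by (simp only: fls_X_power_times_conv_shift fls_shift_nth) simp
  also have "fls_X ^ N * (ramified_deriv N d / d * c) =
      (fls_X ^ N * ramified_deriv N d) * (inverse d * c)"
    by (simp add: divide_inverse ac_simps)
  also have "\<dots> = fls_const (inverse (of_nat N)) * (rho * c)"
    unfolding fls_X_power_times_ramified_deriv[OF N] rho_def by (simp add: divide_inverse ac_simps)
  finally show ?thesis
    by (simp only: fls_mult_const_nth rho_c) (simp add: field_simps)
qed

lemma root_laplacian_ramified_nth:
  assumes N: "N > 0" and inj: "inj_on a {..<n}" and k: "k < n"
    and c: "\<And>j. j < n \<Longrightarrow> fls_order_ge (c j) M"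
  shows "root_laplacian (ramified_deriv N) n a c k $$ (M - int N) =
    (\<Sum>j\<in>{..<n} - {k}. of_int (fls_subdegree (a k - a j)) / of_nat N * (c k $$ M - c j $$ M))"
  unfolding root_laplacian_def fls_nth_sum derivation_diff[OF derivation_ramified_deriv, symmetric]
proof (intro sum.cong refl)
  fix j
  assume "j \<in> {..<n} - {k}"
  then have "a k - a j \<noteq> 0" "fls_order_ge (c k - c j) M"
    using k c root_diff_nonzero[OF inj] by (auto intro: fls_order_ge_diff)
  then show "(ramified_deriv N (a k - a j) / (a k - a j) * (c k - c j)) $$ (M - int N) =
      of_int (fls_subdegree (a k - a j)) / of_nat N * (c k $$ M - c j $$ M)"
    by (subst ramified_deriv_quotient_nth[OF N]) simp_all
qed

lemma root_laplacian_ramified_nonzero: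
  assumes N: "N > 0" and inj: "inj_on a {..<n}"
    and roots: "\<And>k. k < n \<Longrightarrow> fls_order_ge (a k) 1"
    and sum: "(\<Sum>k<n. c k) = 0" and c: "\<And>j. j < n \<Longrightarrow> fls_order_ge (c j) M"
    and nonzero: "k0 < n" "c k0 $$ M \<noteq> 0"
  shows "\<exists>k<n. root_laplacian (ramified_deriv N) n a c k $$ (M - int N) \<noteq> 0"
proof -
  define q where "q k j = real_of_int (fls_subdegree (a k - a j))" for k j
  have q_pos: "q k j > 0" if "k < n" "j < n" "k \<noteq> j" for k j
  proof -
    have "fls_order_ge (a k - a j) 1"
      using roots that by (intro fls_order_ge_diff) auto
    then show ?thesis
      using fls_order_ge_iff_subdegree[OF root_diff_nonzero[OF inj that]] unfolding q_def by simp
  qed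
  have "(\<Sum>k<n. c k $$ M) = 0"
    using sum by (simp flip: fls_nth_sum)
  then obtain k where k: "k < n"
    and "(\<Sum>j\<in>{..<n} - {k}. of_real (q k j) * (c k $$ M - c j $$ M)) \<noteq> 0"
    using weighted_laplacian_nonzero[where q = q and lam = "\<lambda>k. c k $$ M", OF q_pos _ nonzero]
    by blast
  moreover have "root_laplacian (ramified_deriv N) n a c k $$ (M - int N) =
      inverse (of_nat N) * (\<Sum>j\<in>{..<n} - {k}. of_real (q k j) * (c k $$ M - c j $$ M))"
    using root_laplacian_ramified_nth[OF N inj k c]
    by (simp add: q_def sum_distrib_left field_simps)
  ultimately show ?thesis
    using k N by auto
qed

context
  fixes N :: nat
  assumes N: "N > 0"
begin

lemma ramify_add: "ramify N (x + y) = ramify N x + ramify N y"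
  and ramify_mult: "ramify N (x * y) = ramify N x * ramify N y"
  and ramify_fps_to_fls: "ramify N (fps_to_fls c) = fps_to_fls (c oo fps_X ^ N)"
  and ramify_eq_0_iff: "ramify N x = 0 \<longleftrightarrow> x = 0"
  using N unfolding ramify_def
  by (simp_all add: fls_compose_fps_add fls_compose_fps_mult fls_compose_fps_eq_0_iff)

lemma ramify_0: "ramify N 0 = 0"
  by (simp add: ramify_def)

lemma map_poly_ramify_add:
  "map_poly (ramify N) (p + q) = map_poly (ramify N) p + map_poly (ramify N) q"
  by (rule map_poly_hom_add[where h = "ramify N", OF ramify_0 ramify_add])

lemma map_poly_ramify_mult:
  "map_poly (ramify N) (p * q) = map_poly (ramify N) p * map_poly (ramify N) q"
  by (rule map_poly_hom_mult[where h = "ramify N", OF ramify_0 ramify_add ramify_mult])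

lemma map_poly_ramify_pderiv: "map_poly (ramify N) (pderiv p) = pderiv (map_poly (ramify N) p)"
  by (rule map_poly_hom_pderiv[where h = "ramify N", OF ramify_0])
    (simp add: ramify_mult, simp add: ramify_def)

lemma degree_map_poly_ramify: "degree (map_poly (ramify N) p) = degree p"
  by (rule degree_map_poly) (simp add: ramify_eq_0_iff)

lemma map_poly_ramify_eq_0_iff: "map_poly (ramify N) p = 0 \<longleftrightarrow> p = 0"
  using map_poly_eq_0_iff[of "ramify N" p] ramify_0 ramify_eq_0_iff by auto

lemma ramify_fps_deriv:
  "ramify N (fps_to_fls (fps_deriv c)) = ramified_deriv N (ramify N (fps_to_fls c))"
  by (simp add: ramify_fps_to_fls ramified_deriv_compose[OF N])

end

section \<open>Syzygies of a ramified distinguished polynomial\<close>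

locale ramified_distinguished =
  fixes f :: "complex fps poly" and n N :: nat and a :: "nat \<Rightarrow> complex fls"
  assumes distinguished: "distinguished f" and degree_f: "degree f = n" and n_ge_2: "n \<ge> 2"
    and N_pos: "N > 0" and inj: "inj_on a {..<n}"
    and split: "map_poly (ramify N) (fps_poly_to_fls f) = root_prod n a"
begin

abbreviation ramify_poly :: "complex fls poly \<Rightarrow> complex fls poly" where
  "ramify_poly \<equiv> map_poly (ramify N)"

lemma ramify_dy: "ramify_poly (fps_poly_to_fls (dy f)) = pderiv (root_prod n a)"
proof -
  have "fps_poly_to_fls (dy f) = pderiv (fps_poly_to_fls f)"
    unfolding fps_poly_to_fls_def dy_def
    by (rule map_poly_hom_pderiv) (simp_all add: fls_times_fps_to_fls)
  then show ?thesis
    by (simp add: map_poly_ramify_pderiv[OF N_pos] split)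
qed

lemma ramify_dx:
  "ramify_poly (fps_poly_to_fls (dx f)) = map_poly (ramified_deriv N) (root_prod n a)"
proof -
  have "ramify_poly (fps_poly_to_fls (dx f)) = map_poly (ramify N \<circ> fps_to_fls \<circ> fps_deriv) f"
    unfolding fps_poly_to_fls_def dx_def
    by (simp add: map_poly_map_poly ramify_0[OF N_pos] o_assoc)
  also have "ramify N \<circ> fps_to_fls \<circ> fps_deriv = ramified_deriv N \<circ> (ramify N \<circ> fps_to_fls)"
    by (simp add: fun_eq_iff ramify_fps_deriv[OF N_pos])
  also have "map_poly \<dots> f = map_poly (ramified_deriv N) (ramify_poly (fps_poly_to_fls f))"
    unfolding fps_poly_to_fls_def
    by (simp add: map_poly_map_poly ramify_0[OF N_pos] derivation_0[OF derivation_ramified_deriv])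
  finally show ?thesis
    by (simp add: split)
qed

lemma root_order_pos: "k < n \<Longrightarrow> fls_order_ge (a k) 1"
proof (rule monic_root_order_pos)
  assume "k < n"
  then show "poly (root_prod n a) (a k) = 0"
    by (rule poly_root_prod_root)
  show "lead_coeff (root_prod n a) = 1"
    by (rule lead_coeff_root_prod)
  fix j
  assume "j < degree (root_prod n a)"
  then have "coeff f j $ 0 = 0"
    using distinguished degree_f by (simp add: distinguished_def degree_root_prod)
  moreover have "coeff (root_prod n a) j = fps_to_fls (coeff f j oo fps_X ^ N)"
    by (simp flip: split add: fps_poly_to_fls_def coeff_map_poly ramify_0[OF N_pos]
        ramify_fps_to_fls[OF N_pos])
  ultimately show "fls_order_ge (coeff (root_prod n a) j) 1"
    by (auto simp: fls_order_ge_def)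
qed

definition eps_coord :: "complex fls poly \<Rightarrow> nat \<Rightarrow> complex fls" where
  "eps_coord p k = poly (ramify_poly p) (a k) / eps_diag n a k"

lemma ramify_eq_eps_coords:
  "degree p < n \<Longrightarrow> ramify_poly p = (\<Sum>i<n. smult (eps_coord p i) (eps n a i))"
  unfolding eps_coord_def
  by (rule lagrange_interpolation[OF inj]) (simp add: degree_map_poly_ramify[OF N_pos])

lemma eps_coord_eq:
  assumes "ramify_poly p = (\<Sum>i<n. smult (c i) (eps n a i))" and "k < n"
  shows "eps_coord p k = c k"
  unfolding eps_coord_def using eps_coords_unique[OF inj assms] by simp

lemma val_ge_iff_eps_coord:
  assumes "degree p < n"
  shows "val_ge N n a p r \<longleftrightarrow> (\<forall>k<n. nu_ge N (eps_coord p k) r)"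
proof
  assume "val_ge N n a p r"
  then obtain c where "ramify_poly p = (\<Sum>i<n. smult (c i) (eps n a i))" "\<forall>k<n. nu_ge N (c k) r"
    unfolding val_ge_def by blast
  then show "\<forall>k<n. nu_ge N (eps_coord p k) r"
    using eps_coord_eq by simp
next
  assume "\<forall>k<n. nu_ge N (eps_coord p k) r"
  then show "val_ge N n a p r"
    unfolding val_ge_def using ramify_eq_eps_coords[OF assms] by blast
qed

lemma val_gt_iff_eps_coord:
  assumes "degree p < n"
  shows "val_gt N n a p r \<longleftrightarrow> (\<forall>k<n. nu_gt N (eps_coord p k) r)"
proof
  assume "val_gt N n a p r"
  then obtain c where "ramify_poly p = (\<Sum>i<n. smult (c i) (eps n a i))" "\<forall>k<n. nu_gt N (c k) r"
    unfolding val_gt_def by blast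
  then show "\<forall>k<n. nu_gt N (eps_coord p k) r"
    using eps_coord_eq by simp
next
  assume "\<forall>k<n. nu_gt N (eps_coord p k) r"
  then show "val_gt N n a p r"
    unfolding val_gt_def using ramify_eq_eps_coords[OF assms] by blast
qed

lemma sum_eps_coord:
  assumes "degree p < n - 1"
  shows "(\<Sum>k<n. eps_coord p k) = 0"
proof -
  have "(\<Sum>k<n. eps_coord p k) = coeff (ramify_poly p) (n - 1)"
    using assms by (simp only: ramify_eq_eps_coords coeff_eps_combination_top)
  also have "\<dots> = 0"
    using assms by (simp add: coeff_eq_0 degree_map_poly_ramify[OF N_pos])
  finally show ?thesis .
qed

lemma eps_coord_eq_0_imp:
  assumes "degree p < n" and "\<And>k. k < n \<Longrightarrow> eps_coord p k = 0"
  shows "p = 0"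
proof -
  have "ramify_poly p = 0"
    unfolding ramify_eq_eps_coords[OF assms(1)] using assms(2) by simp
  then show ?thesis
    by (simp add: map_poly_ramify_eq_0_iff[OF N_pos])
qed

context
  fixes u v w :: "complex fls poly"
  assumes deg_u: "degree u < n - 1" and deg_v: "degree v < n" and deg_w: "degree w < n"
    and syzygy: "w * fps_poly_to_fls f = u * fps_poly_to_fls (dx f) + v * fps_poly_to_fls (dy f)"
begin

lemma ramified_syzygy:
  "ramify_poly w * root_prod n a =
    ramify_poly u * map_poly (ramified_deriv N) (root_prod n a) +
    ramify_poly v * pderiv (root_prod n a)"
  using arg_cong[OF syzygy, of ramify_poly]
  by (simp add: map_poly_ramify_add[OF N_pos] map_poly_ramify_mult[OF N_pos] split
      ramify_dx ramify_dy)

lemma ramify_u_eps_coords: "ramify_poly u = (\<Sum>i<n. smult (eps_coord u i) (eps n a i))"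
  using deg_u by (intro ramify_eq_eps_coords) simp

lemma syzygy_eps_coord_right: "k < n \<Longrightarrow> eps_coord v k = ramified_deriv N (a k) * eps_coord u k"
  by (rule syzygy_coord_right[OF inj derivation_ramified_deriv ramify_u_eps_coords
      ramify_eq_eps_coords[OF deg_v] ramified_syzygy])

lemma syzygy_eps_coord_left:
  "k < n \<Longrightarrow> eps_coord w k = root_laplacian (ramified_deriv N) n a (eps_coord u) k"
  by (rule syzygy_coord_left[OF inj derivation_ramified_deriv ramify_u_eps_coords
      ramify_eq_eps_coords[OF deg_v] ramified_syzygy ramify_eq_eps_coords[OF deg_w]])

lemma syzygy_leading_order:
  assumes "k0 < n" "eps_coord u k0 \<noteq> 0"
  obtains M k where "\<And>j. j < n \<Longrightarrow> fls_order_ge (eps_coord u j) M"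
    and "k < n" "eps_coord w k $$ (M - int N) \<noteq> 0"
proof -
  obtain M k1 where M: "\<And>j. j < n \<Longrightarrow> fls_order_ge (eps_coord u j) M"
    and k1: "k1 < n" "eps_coord u k1 $$ M \<noteq> 0"
    using fls_order_ge_min_exists[where c = "eps_coord u", OF assms] by blast
  obtain k where k: "k < n"
    and "root_laplacian (ramified_deriv N) n a (eps_coord u) k $$ (M - int N) \<noteq> 0"
    using root_laplacian_ramified_nonzero[OF N_pos inj root_order_pos sum_eps_coord[OF deg_u] M k1]
    by blast
  then have "eps_coord w k $$ (M - int N) \<noteq> 0"
    by (simp add: syzygy_eps_coord_left)
  then show thesis
    using that M k by blast
qed

lemma syzygy_valuation:
  assumes w: "\<And>k. k < n \<Longrightarrow> nu_ge N (eps_coord w k) r" and k: "k < n"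
  shows "nu_ge N (eps_coord u k) (r + 1)" and "nu_gt N (eps_coord v k) r"
proof (atomize (full), cases "\<exists>k0<n. eps_coord u k0 \<noteq> 0")
  case True
  then obtain M k' where M: "\<And>j. j < n \<Longrightarrow> fls_order_ge (eps_coord u j) M"
    and k': "k' < n" "eps_coord w k' $$ (M - int N) \<noteq> 0"
    using syzygy_leading_order by blast
  have rM: "(r + 1) * of_nat N \<le> of_int M"
    using nu_ge_imp_le_nonzero_nth[OF N_pos w[OF k'(1)] k'(2)] by (simp add: algebra_simps)
  have "fls_order_ge (eps_coord v k) (1 - int N + M)"
    unfolding syzygy_eps_coord_right[OF k]
    using fls_order_ge_mult[OF fls_order_ge_ramified_deriv[OF root_order_pos[OF k]] M[OF k]] by simp
  moreover have "r * of_nat N < of_int (1 - int N + M)"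
    using rM by (simp add: algebra_simps)
  ultimately show "nu_ge N (eps_coord u k) (r + 1) \<and> nu_gt N (eps_coord v k) r"
    using nu_ge_if_order_ge[OF N_pos M[OF k] rM] nu_gt_if_order_ge[OF N_pos] by blast
next
  case False
  then show "nu_ge N (eps_coord u k) (r + 1) \<and> nu_gt N (eps_coord v k) r"
    using k syzygy_eps_coord_right[OF k] by (simp add: nu_ge_def nu_gt_def)
qed

end

lemma syzygy_trivial:
  assumes "degree u < n - 1" "degree v < n"
    and "0 = u * fps_poly_to_fls (dx f) + v * fps_poly_to_fls (dy f)"
  shows "u = 0 \<and> v = 0"
proof -
  have "eps_coord u k = 0" if "k < n" for k
  proof (rule ccontr)
    assume "eps_coord u k \<noteq> 0"
    with syzygy_leading_order[of u v 0 k] assms that show False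
      by (auto simp: eps_coord_def)
  qed
  moreover from this have "eps_coord v k = 0" if "k < n" for k
    using syzygy_eps_coord_right[of u v 0 k] assms that by simp
  ultimately show ?thesis
    using eps_coord_eq_0_imp assms(1,2) by auto
qed

lemma degree_f_fls: "degree (fps_poly_to_fls f) = n"
  unfolding fps_poly_to_fls_def using degree_f by (subst degree_map_poly) simp_all

lemma degree_dx_le: "degree (fps_poly_to_fls (dx f)) \<le> n"
  using degree_map_poly_le[of fps_to_fls "dx f"] degree_map_poly_le[of fps_deriv f] degree_f
  unfolding fps_poly_to_fls_def dx_def by simp

lemma degree_dy_le: "degree (fps_poly_to_fls (dy f)) \<le> n - 1"
  using degree_map_poly_le[of fps_to_fls "dy f"] degree_f unfolding fps_poly_to_fls_def dy_def
  by (simp add: degree_pderiv)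

text \<open>A polynomial \<open>z\<close> of degree \<open>< 2n - 1\<close> encodes the pair \<open>(u, v)\<close> of its lowest \<open>n - 1\<close>
  coefficients and the remaining \<open>n\<close> ones.\<close>

definition syzygy_map :: "complex fls poly \<Rightarrow> complex fls poly" where
  "syzygy_map z = poly_cutoff (n - 1) z * fps_poly_to_fls (dx f)
    + poly_shift (n - 1) z * fps_poly_to_fls (dy f)"

lemma syzygy_map_add: "syzygy_map (p + q) = syzygy_map p + syzygy_map q"
  unfolding syzygy_map_def by (simp add: poly_cutoff_add poly_shift_add algebra_simps)

lemma syzygy_map_smult: "syzygy_map (smult c p) = smult c (syzygy_map p)"
  unfolding syzygy_map_def by (simp add: poly_cutoff_smult poly_shift_smult smult_add_right)

lemma degree_poly_cutoff_syzygy: "degree (poly_cutoff (n - 1) z) < n - 1"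
  using n_ge_2 by (intro degree_poly_cutoff_less) simp

lemma degree_poly_shift_syzygy: "degree z < 2 * n - 1 \<Longrightarrow> degree (poly_shift (n - 1) z) < n"
  using degree_poly_shift_le[of "n - 1" z] n_ge_2 by simp

lemma degree_syzygy_map:
  assumes "degree z < 2 * n - 1"
  shows "degree (syzygy_map z) < 2 * n - 1"
proof -
  have "degree (poly_cutoff (n - 1) z * fps_poly_to_fls (dx f)) \<le> 2 * n - 2"
    using degree_mult_le[of "poly_cutoff (n - 1) z" "fps_poly_to_fls (dx f)"]
      degree_poly_cutoff_syzygy[of z] degree_dx_le
    by linarith
  moreover have "degree (poly_shift (n - 1) z * fps_poly_to_fls (dy f)) \<le> 2 * n - 2"
    using degree_mult_le[of "poly_shift (n - 1) z" "fps_poly_to_fls (dy f)"]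
      degree_poly_shift_syzygy[OF assms] degree_dy_le
    by linarith
  ultimately have "degree (syzygy_map z) \<le> 2 * n - 2"
    unfolding syzygy_map_def by (rule degree_add_le)
  then show ?thesis
    using n_ge_2 by linarith
qed

lemma syzygy_map_eq_0_imp: "degree z < 2 * n - 1 \<Longrightarrow> syzygy_map z = 0 \<Longrightarrow> z = 0"
  using syzygy_trivial[OF degree_poly_cutoff_syzygy degree_poly_shift_syzygy]
  by (auto simp: syzygy_map_def intro: poly_cutoff_shift_eq_0)

lemma syzygy_exists:
  assumes "degree w < n - 1"
  obtains u v where "degree u < n - 1" "degree v < n"
    "w * fps_poly_to_fls f = u * fps_poly_to_fls (dx f) + v * fps_poly_to_fls (dy f)"
proof -
  have "degree (w * fps_poly_to_fls f) < 2 * n - 1"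
    using degree_mult_le[of w "fps_poly_to_fls f"] assms degree_f_fls by linarith
  moreover have "0 < 2 * n - 1"
    using n_ge_2 by simp
  ultimately obtain z where "degree z < 2 * n - 1" "syzygy_map z = w * fps_poly_to_fls f"
    using bounded_degree_inj_imp_surj[OF syzygy_map_add syzygy_map_smult degree_syzygy_map
        syzygy_map_eq_0_imp]
    by blast
  then show thesis
    using that[OF degree_poly_cutoff_syzygy degree_poly_shift_syzygy] unfolding syzygy_map_def
    by metis
qed

end

theorem mainTheorem4:
  fixes f :: "complex fps poly" and n :: nat and r :: rat
    and N :: nat and a :: "nat \<Rightarrow> complex fls"
  assumes dist: "distinguished f" and red: "reduced f"
    and deg: "degree f = n" and n2: "n \<ge> 2"
    and N: "N > 0"
    and a_dist: "inj_on a {..<n}"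
    and split: "map_poly (ramify N) (fps_poly_to_fls f) = (\<Prod>i<n. [:- a i, 1:])"
    and r: "r * of_nat (lcm_irr_degrees f) \<in> \<int>"
  shows "\<forall>w :: complex fls poly. degree w < n - 1 \<and> val_ge N n a w r \<longrightarrow>
           (\<exists>u v :: complex fls poly.
              degree u < n - 1 \<and> val_ge N n a u (r + 1) \<and>
              degree v < n \<and> val_gt N n a v r \<and>
              w * fps_poly_to_fls f = u * fps_poly_to_fls (dx f) + v * fps_poly_to_fls (dy f))"
proof (intro allI impI)
  interpret ramified_distinguished f n N a
    using dist deg n2 N a_dist split by unfold_locales (simp_all add: root_prod_def)
  fix w :: "complex fls poly"
  assume "degree w < n - 1 \<and> val_ge N n a w r"
  then have deg_w: "degree w < n - 1" and w: "\<forall>k<n. nu_ge N (eps_coord w k) r"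
    using val_ge_iff_eps_coord[of w] by auto
  obtain u v where deg_u: "degree u < n - 1" and deg_v: "degree v < n"
    and syzygy: "w * fps_poly_to_fls f = u * fps_poly_to_fls (dx f) + v * fps_poly_to_fls (dy f)"
    using syzygy_exists[OF deg_w] by blast
  have "val_ge N n a u (r + 1)" "val_gt N n a v r"
    using syzygy_valuation[OF deg_u deg_v _ syzygy] w deg_w deg_u deg_v
    by (simp_all add: val_ge_iff_eps_coord val_gt_iff_eps_coord)
  with deg_u deg_v syzygy show "\<exists>u v. degree u < n - 1 \<and> val_ge N n a u (r + 1) \<and>
      degree v < n \<and> val_gt N n a v r \<and>
      w * fps_poly_to_fls f = u * fps_poly_to_fls (dx f) + v * fps_poly_to_fls (dy f)"
    by blast
qed

end
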